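(* For every $\phi\in\mathcal C_{\rm per}$, every $f\in\mathcal V_{\rm per}$, and $p\in\{4,6\}$, $$\|\phi\|_p\le\sqrt{p/2}\,\|\phi_{\mathbf F}\|_{L^p(\Omega)},\qquad \|f\|_p\le\sqrt{p/2}\,\|f_{\mathbf F}\|_{L^p(\Omega)}.$$
   Context: Let $L>0$, let $N=2K+1$ be odd, $h=L/N$, and $\Omega=(0,L)^2$. Grid functions: - $\mathcal C_{\rm per}$: real grid functions $\phi_{i,j}$, $N$-periodic in $i$ and $j$, located at $(x_i,y_j)=((i-\frac12)h,(j-\frac12)h)$. - $\mathcal V_{\rm per}$: periodic vertex functions $f_{i+\frac12,j+\frac12}$ located at $(ih,jh)$. Trigonometric interpolants: - Every $\phi\in\mathcal C_{\rm per}$ has a unique representation $\phi_{i,j}=\sum_{\ell,m=-K}^K\hat\phi_{\ell,m}e^{2\pi\mathrm i(\ell x_i+my_j)/L}$, with trigonometric interpolant $\phi_{\mathbf F}(x,y)=\sum_{\ell,m=-K}^K\hat\phi_{\ell,m}e^{2\pi\mathrm i(\ell x+my)/L}$. - The interpolant $f_{\mathbf F}$ of a vertex function $f$ is defined in the same way, using the vertex nodes $(ih,jh)$. Discrete norms: for cell functions $\|\phi\|_p^p=h^2\sum_{i,j=1}^N|\phi_{i,j}|^p$, and for vertex functions $\|f\|_p^p=h^2\sum_{i,j=1}^N|f_{i+\frac12,j+\frac12}|^p$. *)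

theory Defs
  imports "HOL-Analysis.Analysis"
begin

text \<open>Grid setup: N = 2K+1, h = L/N. The node of index (i,j) is ((i - off) h, (j - off) h),
  where off = 1/2 for cell-centred functions and off = 0 for vertex functions
  (the vertex value f_{i+1/2,j+1/2} is stored as f i j).\<close>

definition grid_periodic :: "nat \<Rightarrow> (int \<Rightarrow> int \<Rightarrow> real) \<Rightarrow> bool" where
  "grid_periodic N g \<longleftrightarrow> (\<forall>i j. g (i + int N) j = g i j \<and> g i (j + int N) = g i j)"

definition node :: "real \<Rightarrow> nat \<Rightarrow> real \<Rightarrow> int \<Rightarrow> real" where
  "node L N off i = (real_of_int i - off) * (L / real N)"

definition trig_mode :: "real \<Rightarrow> int \<Rightarrow> int \<Rightarrow> real \<Rightarrow> real \<Rightarrow> complex" where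
  "trig_mode L l m x y = exp (2 * pi * \<i> * complex_of_real ((real_of_int l * x + real_of_int m * y) / L))"

definition trig_coeffs :: "real \<Rightarrow> nat \<Rightarrow> real \<Rightarrow> (int \<Rightarrow> int \<Rightarrow> real) \<Rightarrow> int \<Rightarrow> int \<Rightarrow> complex" where
  "trig_coeffs L K off g = (THE c.
      (\<forall>l m. \<not> (\<bar>l\<bar> \<le> int K \<and> \<bar>m\<bar> \<le> int K) \<longrightarrow> c l m = 0) \<and>
      (\<forall>i j. complex_of_real (g i j) =
          (\<Sum>l\<in>{- int K..int K}. \<Sum>m\<in>{- int K..int K}.
              c l m * trig_mode L l m (node L (2*K+1) off i) (node L (2*K+1) off j))))"

definition trig_interp :: "real \<Rightarrow> nat \<Rightarrow> real \<Rightarrow> (int \<Rightarrow> int \<Rightarrow> real) \<Rightarrow> real \<Rightarrow> real \<Rightarrow> complex" where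
  "trig_interp L K off g x y =
     (\<Sum>l\<in>{- int K..int K}. \<Sum>m\<in>{- int K..int K}. trig_coeffs L K off g l m * trig_mode L l m x y)"

definition disc_norm :: "real \<Rightarrow> nat \<Rightarrow> nat \<Rightarrow> (int \<Rightarrow> int \<Rightarrow> real) \<Rightarrow> real" where
  "disc_norm L N p g = ((L / real N)^2 * (\<Sum>i\<in>{1..int N}. \<Sum>j\<in>{1..int N}. \<bar>g i j\<bar> ^ p)) powr (1 / real p)"

definition Lp_norm_box :: "real \<Rightarrow> nat \<Rightarrow> (real \<Rightarrow> real \<Rightarrow> complex) \<Rightarrow> real" where
  "Lp_norm_box L p u = (LINT z : {0<..<L} \<times> {0<..<L} | lborel. cmod (u (fst z) (snd z)) ^ p) powr (1 / real p)"

end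

theory Submission
  imports Defs
begin

text \<open>Write \<open>p = 2q\<close> and let \<open>F\<close> be the interpolant of \<open>g\<close>. Then \<open>F\<^sup>q\<close> is a trigonometric
  polynomial of degree \<open>qK\<close> whose values at the nodes are \<open>g\<^sup>q\<close>. By Parseval,
  \<open>\<integral>|F|\<^sup>p = L\<^sup>2 \<Sum>|d\<^sub>n|\<^sup>2\<close> for the coefficients \<open>d\<close> of \<open>F\<^sup>q\<close>. The discrete sum \<open>\<Sum>|g|\<^sup>p\<close>
  of \<open>|F\<^sup>q|\<^sup>2\<close> over the nodes only sees frequencies modulo \<open>N = 2K+1\<close>. A residue class meets
  \<open>[-qK, qK]\<close> in at most \<open>q\<close> points, so each frequency has at most \<open>q\<^sup>2\<close> aliases, and by
  \<open>ab \<le> (a\<^sup>2 + b\<^sup>2)/2\<close> that sum is at most \<open>q\<^sup>2 N\<^sup>2 \<Sum>|d\<^sub>n|\<^sup>2\<close>.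
  Hence \<open>h\<^sup>2 \<Sum>|g|\<^sup>p \<le> q\<^sup>2 \<integral>|F|\<^sup>p\<close>, and \<open>q\<^bsup>1/q\<^esup> \<le> \<surd>q\<close>.\<close>

section \<open>Exponential sums\<close>

definition wave :: "real \<Rightarrow> int \<Rightarrow> real \<Rightarrow> complex" where
  "wave L k x = exp (2 * pi * \<i> * complex_of_real (real_of_int k * x / L))"

lemma trig_mode_eq_wave: "trig_mode L l m x y = wave L l x * wave L m y"
  unfolding trig_mode_def wave_def
  by (simp add: add_divide_distrib distrib_left exp_add[symmetric])

lemma wave_mult: "wave L k x * wave L k' x = wave L (k + k') x"
  unfolding wave_def by (simp add: exp_add[symmetric] algebra_simps add_divide_distrib)

lemma cnj_wave: "cnj (wave L k x) = wave L (- k) x"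
  unfolding wave_def exp_cnj by simp

lemma trig_mode_mult_cnj:
  "trig_mode L l m x y * cnj (trig_mode L l' m' x y) = wave L (l - l') x * wave L (m - m') y"
proof -
  have "trig_mode L l m x y * cnj (trig_mode L l' m' x y)
      = (wave L l x * wave L (- l') x) * (wave L m y * wave L (- m') y)"
    unfolding trig_mode_eq_wave by (simp add: cnj_wave mult_ac)
  then show ?thesis
    by (simp add: wave_mult)
qed

lemma trig_mode_mult:
  "trig_mode L l m x y * trig_mode L l' m' x y = trig_mode L (l + l') (m + m') x y"
  unfolding trig_mode_eq_wave by (simp add: mult_ac wave_mult[symmetric])

lemma exp_2pi_int: "exp (2 * pi * \<i> * complex_of_real (real_of_int t)) = 1"
  using exp_2pi_1_int[of t] by (simp add: algebra_simps)

lemma exp_2pi_add: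
  "exp (2 * pi * \<i> * complex_of_real (x + y)) =
     exp (2 * pi * \<i> * complex_of_real x) * exp (2 * pi * \<i> * complex_of_real y)"
  by (simp only: of_real_add distrib_left exp_add)

lemma sum_roots_of_unity:
  fixes t :: int
  assumes "N > 0"
  shows "(\<Sum>k<N. exp (2 * pi * \<i> * complex_of_real (real_of_int t * real k / real N)))
         = (if int N dvd t then of_nat N else 0)"
proof -
  define z where "z = exp (2 * pi * \<i> * complex_of_real (real_of_int t / real N))"
  have power_z: "exp (2 * pi * \<i> * complex_of_real (real_of_int t * real k / real N)) = z ^ k" for k
    unfolding z_def exp_of_nat_mult[symmetric] by (simp add: algebra_simps)
  have "z ^ N = exp (2 * pi * \<i> * complex_of_real (real_of_int t))"
    unfolding z_def exp_of_nat_mult[symmetric] using assms by (simp add: algebra_simps)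
  also have "\<dots> = 1"
    by (rule exp_2pi_int)
  finally have z_N: "z ^ N = 1" .
  have z_eq_1: "z = 1 \<longleftrightarrow> int N dvd t"
  proof
    assume "z = 1"
    then obtain n :: int where "2 * pi * (real_of_int t / real N) = of_int (2 * n) * pi"
      unfolding z_def exp_eq_1 by (auto simp: algebra_simps)
    then have "real_of_int t = real_of_int (n * int N)"
      using assms by (simp add: field_simps)
    then show "int N dvd t"
      by (simp only: of_int_eq_iff) simp
  next
    assume "int N dvd t"
    then obtain n where "t = int N * n" by auto
    then show "z = 1"
      unfolding z_def using assms exp_2pi_int[of n] by simp
  qed
  show ?thesis
    unfolding power_z using z_eq_1 z_N by (cases "z = 1") (simp_all add: geometric_sum)
qed

lemma sum_int_interval_reindex:
  "(\<Sum>i\<in>{a..a + int N - 1}. f i) = (\<Sum>k<N. f (a + int k))"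
proof -
  have "{a..a + int N - 1} = (\<lambda>k. a + int k) ` {..<N}"
  proof (intro set_eqI iffI)
    fix x assume "x \<in> {a..a + int N - 1}"
    then show "x \<in> (\<lambda>k. a + int k) ` {..<N}"
      by (intro image_eqI[of _ _ "nat (x - a)"]) auto
  qed auto
  then show ?thesis
    by (simp add: sum.reindex inj_on_def)
qed

lemma sum_exp_consecutive:
  fixes t a :: int
  assumes "N > 0"
  shows "(\<Sum>i\<in>{a..a + int N - 1}. exp (2 * pi * \<i> * complex_of_real (real_of_int t * (real_of_int i - off) / real N)))
       = (if int N dvd t
          then of_nat N * exp (2 * pi * \<i> * complex_of_real (real_of_int t * (real_of_int a - off) / real N))
          else 0)"
proof -
  define c where "c = exp (2 * pi * \<i> * complex_of_real (real_of_int t * (real_of_int a - off) / real N))"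
  have "real_of_int t * (real_of_int (a + int k) - off) / real N
        = real_of_int t * (real_of_int a - off) / real N + real_of_int t * real k / real N" for k
    by (simp add: algebra_simps add_divide_distrib diff_divide_distrib)
  then have "(\<Sum>i\<in>{a..a + int N - 1}. exp (2 * pi * \<i> * complex_of_real (real_of_int t * (real_of_int i - off) / real N)))
      = c * (\<Sum>k<N. exp (2 * pi * \<i> * complex_of_real (real_of_int t * real k / real N)))"
    unfolding sum_int_interval_reindex sum_distrib_left c_def by (simp only: exp_2pi_add)
  then show ?thesis
    unfolding sum_roots_of_unity[OF assms] c_def by simp
qed

section \<open>Discrete Fourier interpolation\<close>

lemma int_periodic_shift:
  fixes f :: "int \<Rightarrow> 'a"
  assumes periodic: "\<And>x. f (x + p) = f x"
  shows "f (x + p * k) = f x"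
proof -
  have shift_nat: "f (x + p * int n) = f x" for x n
  proof (induction n)
    case (Suc n)
    then show ?case
      using periodic[of "x + p * int n"] by (simp add: algebra_simps)
  qed simp
  show ?thesis
  proof (cases "k \<ge> 0")
    case True
    then show ?thesis using shift_nat[of x "nat k"] by simp
  next
    case False
    then show ?thesis using shift_nat[of "x + p * k" "nat (- k)"] by simp
  qed
qed

lemma grid_periodic_mod:
  assumes "grid_periodic N g"
  shows "g ((i - 1) mod int N + 1) ((j - 1) mod int N + 1) = g i j"
proof -
  have row: "g (i' + int N * k) j' = g i' j'" and column: "g i' (j' + int N * k) = g i' j'" for i' j' k
    using int_periodic_shift[of "\<lambda>i. g i j'" "int N"] int_periodic_shift[of "g i'" "int N"] assms
    by (auto simp: grid_periodic_def)
  have "g i j = g (((i - 1) mod int N + 1) + int N * ((i - 1) div int N))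
                  (((j - 1) mod int N + 1) + int N * ((j - 1) div int N))"
    by simp
  then show ?thesis
    by (simp only: row column)
qed

lemma sum_dvd_select:
  assumes "N > 0"
  shows "(\<Sum>a\<in>{1..int N}. if int N dvd (i - a) then h a else 0) = h ((i - 1) mod int N + 1)"
proof -
  have "int N dvd (i - a) \<longleftrightarrow> a = (i - 1) mod int N + 1" if "a \<in> {1..int N}" for a
  proof -
    have "int N dvd (i - a) \<longleftrightarrow> (i - 1) mod int N = (a - 1) mod int N"
      by (simp add: mod_eq_dvd_iff)
    also have "(a - 1) mod int N = a - 1"
      using that by simp
    finally show ?thesis by auto
  qed
  moreover have "0 \<le> (i - 1) mod int N" "(i - 1) mod int N < int N"
    using assms by simp_all
  ultimately show ?thesis
    by (simp add: sum.delta cong: if_cong)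
qed

lemma sum_swap2:
  "(\<Sum>l\<in>A. \<Sum>m\<in>B. \<Sum>a\<in>C. \<Sum>b\<in>D. F l m a b) = (\<Sum>a\<in>C. \<Sum>b\<in>D. \<Sum>l\<in>A. \<Sum>m\<in>B. F l m a b)"
proof -
  have "(\<Sum>l\<in>A. \<Sum>m\<in>B. \<Sum>a\<in>C. \<Sum>b\<in>D. F l m a b) = (\<Sum>l\<in>A. \<Sum>a\<in>C. \<Sum>b\<in>D. \<Sum>m\<in>B. F l m a b)"
    by (rule sum.cong[OF refl]) (simp add: sum.swap[of _ B] sum.swap[of _ B D])
  also have "\<dots> = (\<Sum>a\<in>C. \<Sum>b\<in>D. \<Sum>l\<in>A. \<Sum>m\<in>B. F l m a b)"
    by (simp add: sum.swap[of _ A])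
  finally show ?thesis .
qed

lemma wave_node:
  assumes "L > 0" "N > 0"
  shows "wave L k (node L N off i)
       = exp (2 * pi * \<i> * complex_of_real (real_of_int k * (real_of_int i - off) / real N))"
proof -
  have "real_of_int k * ((real_of_int i - off) * (L / real N)) / L = real_of_int k * (real_of_int i - off) / real N"
    using assms by simp
  then show ?thesis
    unfolding wave_def node_def by simp
qed

lemma sum_wave_nodes:
  assumes "L > 0" "N > 0"
  shows "(\<Sum>i\<in>{1..int N}. wave L t (node L N off i)) =
     (if int N dvd t
      then of_nat N * exp (2 * pi * \<i> * complex_of_real (real_of_int t * (1 - off) / real N))
      else 0)"
  using sum_exp_consecutive[OF assms(2), where t=t and a=1 and off=off] by (simp add: wave_node[OF assms])

lemma norm_sum_wave_nodes:
  assumes "L > 0" "N > 0"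
  shows "cmod (\<Sum>i\<in>{1..int N}. wave L t (node L N off i)) = (if int N dvd t then real N else 0)"
  unfolding sum_wave_nodes[OF assms] by (simp add: norm_mult norm_exp_eq_Re)

lemma sum_wave_nodes_orthogonal:
  assumes "L > 0" "\<bar>l\<bar> \<le> int K" "\<bar>l'\<bar> \<le> int K"
  shows "(\<Sum>i\<in>{1..int (2*K+1)}. wave L (l - l') (node L (2*K+1) off i))
       = (if l = l' then of_nat (2*K+1) else 0)"
proof -
  have "\<bar>l - l'\<bar> < int (2*K+1)"
    using assms by (simp add: abs_le_iff abs_less_iff)
  then have "int (2*K+1) dvd (l - l') \<longleftrightarrow> l = l'"
    using dvd_imp_le_int[of "l - l'" "int (2*K+1)"] by force
  then show ?thesis
    using sum_wave_nodes[OF assms(1), of "2*K+1" "l - l'" off] by simp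
qed

lemma sum_frequencies_wave_nodes:
  assumes "L > 0"
  shows "(\<Sum>l\<in>{- int K..int K}. wave L l (node L (2*K+1) off i) * cnj (wave L l (node L (2*K+1) off a)))
       = (if int (2*K+1) dvd (i - a) then of_nat (2*K+1) else 0)"
proof -
  define N where "N = 2*K+1"
  have N_pos: "N > 0" unfolding N_def by simp
  have "wave L l (node L N off i) * cnj (wave L l (node L N off a))
      = exp (2 * pi * \<i> * complex_of_real (real_of_int (i - a) * (real_of_int l - 0) / real N))" for l
    \<comment> \<open>the \<open>- 0\<close> matches \<open>sum_exp_consecutive\<close> with offset \<open>0\<close>\<close>
  proof -
    have "real_of_int (i - a) * (real_of_int l - 0) / real N
        = real_of_int l * (real_of_int i - off) / real N + real_of_int (- l) * (real_of_int a - off) / real N"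
      by (simp add: algebra_simps add_divide_distrib diff_divide_distrib)
    then show ?thesis
      unfolding cnj_wave unfolding wave_node[OF assms N_pos] by (simp only: exp_2pi_add)
  qed
  moreover have "{- int K..int K} = {- int K..- int K + int N - 1}"
    unfolding N_def by simp
  moreover have "exp (2 * pi * \<i> * complex_of_real (real_of_int (i - a) * (real_of_int (- int K) - 0) / real N)) = 1"
    if divisible: "int N dvd (i - a)"
  proof -
    obtain r where "i - a = int N * r" using divisible by auto
    then show ?thesis
      using N_pos exp_2pi_int[of "- r * int K"] by simp
  qed
  ultimately show ?thesis
    using sum_exp_consecutive[OF N_pos, where t="i - a" and a="- int K" and off=0] unfolding N_def by simp
qed

text \<open>The inverse discrete Fourier transform: the explicit solution of the uniquely solvable
  system that defines \<open>trig_coeffs\<close>.\<close>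
definition dft_coeffs :: "real \<Rightarrow> nat \<Rightarrow> real \<Rightarrow> (int \<Rightarrow> int \<Rightarrow> real) \<Rightarrow> int \<Rightarrow> int \<Rightarrow> complex" where
  "dft_coeffs L K off g l m =
     (if \<bar>l\<bar> \<le> int K \<and> \<bar>m\<bar> \<le> int K
      then (\<Sum>a\<in>{1..int (2*K+1)}. \<Sum>b\<in>{1..int (2*K+1)}. complex_of_real (g a b)
              * cnj (trig_mode L l m (node L (2*K+1) off a) (node L (2*K+1) off b))) / of_nat ((2*K+1)^2)
      else 0)"

lemma dft_coeffs_interpolate:
  assumes L: "L > 0" and g: "grid_periodic (2*K+1) g"
  shows "complex_of_real (g i j) = (\<Sum>l\<in>{- int K..int K}. \<Sum>m\<in>{- int K..int K}.
           dft_coeffs L K off g l m * trig_mode L l m (node L (2*K+1) off i) (node L (2*K+1) off j))"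
proof -
  define N where "N = 2*K+1"
  have N_pos: "N > 0" unfolding N_def by simp
  define nd where "nd = node L N off"
  define W where "W = (\<lambda>l i a. wave L l (nd i) * cnj (wave L l (nd a)))"
  have sum_W: "(\<Sum>l\<in>{- int K..int K}. W l i a) = (if int N dvd (i - a) then of_nat N else 0)" for i a
    unfolding W_def nd_def N_def by (rule sum_frequencies_wave_nodes[OF L])
  have "(\<Sum>l\<in>{- int K..int K}. \<Sum>m\<in>{- int K..int K}. dft_coeffs L K off g l m * trig_mode L l m (nd i) (nd j))
      = (\<Sum>l\<in>{- int K..int K}. \<Sum>m\<in>{- int K..int K}. \<Sum>a\<in>{1..int N}. \<Sum>b\<in>{1..int N}.
           complex_of_real (g a b) * (W l i a * W m j b) / of_nat (N^2))"
  proof (intro sum.cong refl)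
    fix l m
    assume "l \<in> {- int K..int K}" "m \<in> {- int K..int K}"
    then have "dft_coeffs L K off g l m = (\<Sum>a\<in>{1..int N}. \<Sum>b\<in>{1..int N}.
        complex_of_real (g a b) * cnj (trig_mode L l m (nd a) (nd b))) / of_nat (N^2)"
      unfolding dft_coeffs_def N_def nd_def by auto
    then show "dft_coeffs L K off g l m * trig_mode L l m (nd i) (nd j) = (\<Sum>a\<in>{1..int N}. \<Sum>b\<in>{1..int N}.
        complex_of_real (g a b) * (W l i a * W m j b) / of_nat (N^2))"
      unfolding W_def trig_mode_eq_wave
      by (simp add: sum_divide_distrib sum_distrib_left sum_distrib_right mult_ac)
  qed
  also have "\<dots> = (\<Sum>a\<in>{1..int N}. \<Sum>b\<in>{1..int N}. complex_of_real (g a b)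
           * ((\<Sum>l\<in>{- int K..int K}. W l i a) * (\<Sum>m\<in>{- int K..int K}. W m j b)) / of_nat (N^2))"
    unfolding sum_product by (subst sum_swap2) (simp add: sum_divide_distrib sum_distrib_left)
  also have "\<dots> = (\<Sum>a\<in>{1..int N}. if int N dvd (i - a)
           then (\<Sum>b\<in>{1..int N}. if int N dvd (j - b) then complex_of_real (g a b) else 0) else 0)"
    unfolding sum_W using N_pos by (intro sum.cong refl) (auto simp: power2_eq_square intro: sum.cong)
  also have "\<dots> = complex_of_real (g ((i - 1) mod int N + 1) ((j - 1) mod int N + 1))"
    by (simp add: sum_dvd_select[OF N_pos])
  also have "\<dots> = complex_of_real (g i j)"
    using grid_periodic_mod[OF g] unfolding N_def by simp
  finally show ?thesis
    unfolding nd_def N_def by simp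
qed

lemma dft_coeffs_recover:
  assumes L: "L > 0" and in_range: "\<bar>l'\<bar> \<le> int K" "\<bar>m'\<bar> \<le> int K"
    and c_interpolates: "\<forall>i j. complex_of_real (g i j) = (\<Sum>l\<in>{- int K..int K}. \<Sum>m\<in>{- int K..int K}.
           c l m * trig_mode L l m (node L (2*K+1) off i) (node L (2*K+1) off j))"
  shows "dft_coeffs L K off g l' m' = c l' m'"
proof -
  define N where "N = 2*K+1"
  have N_pos: "N > 0" unfolding N_def by simp
  define nd where "nd = node L N off"
  define S where "S = (\<lambda>t. \<Sum>a\<in>{1..int N}. wave L t (nd a))"
  have "dft_coeffs L K off g l' m' = (\<Sum>a\<in>{1..int N}. \<Sum>b\<in>{1..int N}.
      complex_of_real (g a b) * cnj (trig_mode L l' m' (nd a) (nd b))) / of_nat (N^2)"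
    using in_range unfolding dft_coeffs_def N_def nd_def by simp
  also have "\<dots> = (\<Sum>a\<in>{1..int N}. \<Sum>b\<in>{1..int N}. \<Sum>l\<in>{- int K..int K}. \<Sum>m\<in>{- int K..int K}.
      c l m * (wave L (l - l') (nd a) * wave L (m - m') (nd b))) / of_nat (N^2)"
    using c_interpolates unfolding nd_def N_def
    by (simp add: sum_distrib_right trig_mode_mult_cnj mult.assoc)
  also have "\<dots> = (\<Sum>l\<in>{- int K..int K}. \<Sum>m\<in>{- int K..int K}.
      c l m * (S (l - l') * S (m - m'))) / of_nat (N^2)"
    unfolding S_def sum_product by (subst sum_swap2) (simp add: sum_distrib_left)
  also have "\<dots> = (\<Sum>l\<in>{- int K..int K}. \<Sum>m\<in>{- int K..int K}.
      if m = m' then if l = l' then c l m * of_nat N * of_nat N else 0 else 0) / of_nat (N^2)"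
  proof (intro arg_cong2[where f="(/)"] sum.cong refl)
    fix l m
    assume l: "l \<in> {- int K..int K}" and m: "m \<in> {- int K..int K}"
    have "S (l - l') = (if l = l' then of_nat N else 0)"
      unfolding S_def nd_def N_def using l in_range by (intro sum_wave_nodes_orthogonal[OF L]) auto
    moreover have "S (m - m') = (if m = m' then of_nat N else 0)"
      unfolding S_def nd_def N_def using m in_range by (intro sum_wave_nodes_orthogonal[OF L]) auto
    ultimately show "c l m * (S (l - l') * S (m - m'))
        = (if m = m' then if l = l' then c l m * of_nat N * of_nat N else 0 else 0)"
      by simp
  qed
  also have "\<dots> = c l' m'"
    using in_range N_pos by (simp add: sum.delta power2_eq_square abs_le_iff)
  finally show ?thesis .
qed

lemma interpolation_coeffs_unique:
  assumes "L > 0"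
    and "\<forall>l m. \<not> (\<bar>l\<bar> \<le> int K \<and> \<bar>m\<bar> \<le> int K) \<longrightarrow> c l m = 0"
    and "\<forall>i j. complex_of_real (g i j) = (\<Sum>l\<in>{- int K..int K}. \<Sum>m\<in>{- int K..int K}.
           c l m * trig_mode L l m (node L (2*K+1) off i) (node L (2*K+1) off j))"
  shows "c = dft_coeffs L K off g"
proof (intro ext)
  fix l m
  show "c l m = dft_coeffs L K off g l m"
    using dft_coeffs_recover[OF assms(1) _ _ assms(3), of l m] assms(2)
    by (cases "\<bar>l\<bar> \<le> int K \<and> \<bar>m\<bar> \<le> int K") (auto simp: dft_coeffs_def)
qed

lemma trig_coeffs_eq_dft_coeffs:
  assumes "L > 0" and "grid_periodic (2*K+1) g"
  shows "trig_coeffs L K off g = dft_coeffs L K off g"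
  unfolding trig_coeffs_def
proof (rule the_equality)
  show "(\<forall>l m. \<not> (\<bar>l\<bar> \<le> int K \<and> \<bar>m\<bar> \<le> int K) \<longrightarrow> dft_coeffs L K off g l m = 0) \<and>
    (\<forall>i j. complex_of_real (g i j) = (\<Sum>l\<in>{- int K..int K}. \<Sum>m\<in>{- int K..int K}.
       dft_coeffs L K off g l m * trig_mode L l m (node L (2*K+1) off i) (node L (2*K+1) off j)))"
    using dft_coeffs_interpolate[OF assms] by (simp add: dft_coeffs_def)
qed (use interpolation_coeffs_unique[OF assms(1)] in blast)

lemma trig_interp_node:
  assumes "L > 0" and "grid_periodic (2*K+1) g"
  shows "trig_interp L K off g (node L (2*K+1) off i) (node L (2*K+1) off j) = complex_of_real (g i j)"
  unfolding trig_interp_def trig_coeffs_eq_dft_coeffs[OF assms] by (rule dft_coeffs_interpolate[OF assms, symmetric])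

section \<open>Trigonometric polynomials and Parseval\<close>

definition freq_box :: "nat \<Rightarrow> (int \<times> int) set" where
  "freq_box M = {- int M..int M} \<times> {- int M..int M}"

lemma finite_freq_box [simp]: "finite (freq_box M)"
  unfolding freq_box_def by simp

definition trig_poly :: "real \<Rightarrow> nat \<Rightarrow> (int \<times> int \<Rightarrow> complex) \<Rightarrow> real \<Rightarrow> real \<Rightarrow> complex" where
  "trig_poly L M d x y = (\<Sum>n\<in>freq_box M. d n * trig_mode L (fst n) (snd n) x y)"

lemma trig_interp_eq_trig_poly:
  "trig_interp L K off g x y = trig_poly L K (\<lambda>n. trig_coeffs L K off g (fst n) (snd n)) x y"
  unfolding trig_interp_def trig_poly_def freq_box_def by (simp add: sum.cartesian_product case_prod_beta)

lemma trig_poly_mult: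
  "trig_poly L M a x y * trig_poly L M' b x y
   = trig_poly L (M + M') (\<lambda>n. \<Sum>u\<in>{u \<in> freq_box M \<times> freq_box M'. fst u + snd u = n}. a (fst u) * b (snd u)) x y"
proof -
  define S where "S = freq_box M \<times> freq_box M'"
  define h where "h = (\<lambda>u. a (fst u) * b (snd u) * trig_mode L (fst (fst u + snd u)) (snd (fst u + snd u)) x y)"
  have sums_in_box: "(\<lambda>u. fst u + snd u) ` S \<subseteq> freq_box (M + M')"
    unfolding S_def freq_box_def by auto
  have "trig_poly L M a x y * trig_poly L M' b x y = sum h S"
    unfolding trig_poly_def sum_product sum.cartesian_product S_def h_def
    by (intro sum.cong refl) (auto simp: trig_mode_mult mult_ac)
  also have "\<dots> = (\<Sum>n\<in>freq_box (M + M'). \<Sum>u\<in>{u \<in> S. fst u + snd u = n}. h u)"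
    by (rule sum.group[OF _ _ sums_in_box, symmetric]) (simp_all add: S_def)
  also have "\<dots> = trig_poly L (M + M') (\<lambda>n. \<Sum>u\<in>{u \<in> S. fst u + snd u = n}. a (fst u) * b (snd u)) x y"
    unfolding trig_poly_def h_def sum_distrib_right by (intro sum.cong refl) auto
  finally show ?thesis
    unfolding S_def .
qed

lemma trig_poly_power: "\<exists>d. \<forall>x y. trig_poly L M c x y ^ q = trig_poly L (q * M) d x y"
proof (induction q)
  case 0
  have "trig_poly L 0 (\<lambda>_. 1) x y = 1" for x y
    by (simp add: trig_poly_def freq_box_def trig_mode_def)
  then show ?case by auto
next
  case (Suc q)
  then obtain d where "\<forall>x y. trig_poly L M c x y ^ q = trig_poly L (q * M) d x y"
    by blast
  then have "trig_poly L M c x y ^ Suc q = trig_poly L (Suc q * M)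
      (\<lambda>n. \<Sum>u\<in>{u \<in> freq_box M \<times> freq_box (q * M). fst u + snd u = n}. c (fst u) * d (snd u)) x y" for x y
    using trig_poly_mult[of L M c x y "q * M" d] by simp
  then show ?case
    by blast
qed

lemma trig_poly_mult_cnj:
  "trig_poly L M d x y * cnj (trig_poly L M d x y)
   = (\<Sum>n\<in>freq_box M. \<Sum>n'\<in>freq_box M.
        d n * cnj (d n') * (wave L (fst n - fst n') x * wave L (snd n - snd n') y))"
proof -
  have "trig_poly L M d x y * cnj (trig_poly L M d x y)
      = (\<Sum>n\<in>freq_box M. \<Sum>n'\<in>freq_box M. d n * cnj (d n')
          * (trig_mode L (fst n) (snd n) x y * cnj (trig_mode L (fst n') (snd n') x y)))"
    unfolding trig_poly_def by (simp add: sum_product mult_ac)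
  then show ?thesis
    by (simp only: trig_mode_mult_cnj)
qed

lemma wave_eq_exp_scaleR: "wave L t x = exp (x *\<^sub>R (2 * pi * \<i> * of_int t / of_real L))"
  unfolding wave_def scaleR_conv_of_real by (simp add: field_simps)

lemma continuous_on_wave [continuous_intros]:
  "continuous_on S f \<Longrightarrow> continuous_on S (\<lambda>x. wave L t (f x))"
  unfolding wave_eq_exp_scaleR by (intro continuous_intros)

lemma integral_wave:
  assumes "L > 0"
  shows "integral {0..L} (wave L t) = (if t = 0 then complex_of_real L else 0)"
proof (cases "t = 0")
  case True
  have "wave L 0 = (\<lambda>_. 1)"
    by (simp add: wave_def fun_eq_iff)
  then show ?thesis
    using True assms by (simp add: scaleR_conv_of_real)
next
  case False
  define A where "A = 2 * pi * \<i> * of_int t / (of_real L :: complex)"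
  have A_nonzero: "A \<noteq> 0"
    unfolding A_def using False assms by simp
  have wave_eq: "wave L t x = exp (x *\<^sub>R A)" for x
    unfolding wave_eq_exp_scaleR A_def ..
  define F where "F = (\<lambda>x::real. exp (x *\<^sub>R A) / A)"
  have "(wave L t has_integral F L - F 0) {0..L}"
    unfolding wave_eq
  proof (rule fundamental_theorem_of_calculus)
    fix x :: real
    have "(F has_vector_derivative (exp (x *\<^sub>R A) * A / A)) (at x within {0..L})"
      unfolding F_def by (intro has_vector_derivative_divide exp_scaleR_has_vector_derivative_right)
    then show "(F has_vector_derivative exp (x *\<^sub>R A)) (at x within {0..L})"
      using A_nonzero by simp
  qed (use assms in simp)
  moreover have "exp (L *\<^sub>R A) = 1"
    unfolding A_def scaleR_conv_of_real using assms exp_2pi_int[of t] by (simp add: field_simps)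
  ultimately show ?thesis
    using False by (simp add: F_def integral_unique)
qed

lemma integral_wave_times_wave:
  assumes "L > 0"
  shows "integral (cbox (0, 0) (L, L)) (\<lambda>z. wave L s (fst z) * wave L t (snd z))
       = (if s = 0 \<and> t = 0 then complex_of_real (L^2) else 0)"
proof -
  have "integral (cbox (0, 0) (L, L)) (\<lambda>z. wave L s (fst z) * wave L t (snd z))
      = integral (cbox 0 L) (\<lambda>x. integral (cbox 0 L) (\<lambda>y. wave L s x * wave L t y))"
    by (subst integral_prod_continuous)
       (auto intro!: continuous_intros)
  also have "\<dots> = integral {0..L} (wave L s) * integral {0..L} (wave L t)"
    by (simp add: integral_mult_right integral_mult_left)
  finally show ?thesis
    unfolding integral_wave[OF assms] by (simp add: power2_eq_square)
qed

lemma set_lebesgue_integral_open_square_eq_integral: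
  fixes H :: "real \<times> real \<Rightarrow> real"
  assumes "continuous_on UNIV H"
  shows "(LINT z : {0<..<L} \<times> {0<..<L} | lborel. H z) = integral (cbox (0, 0) (L, L)) H"
proof -
  have "set_integrable lborel (cbox (0, 0) (L, L)) H"
    unfolding set_integrable_def
    by (rule borel_integrable_compact) (auto intro: continuous_on_subset[OF assms])
  then have "set_integrable lborel ({0<..<L} \<times> {0<..<L}) H"
    by (rule set_integrable_subset) (auto simp: borel_open open_Times cbox_Pair_eq)
  then have "(LINT z : {0<..<L} \<times> {0<..<L} | lborel. H z) = integral ({0<..<L} \<times> {0<..<L}) H"
    by (rule set_borel_integral_eq_integral)
  also have "integral ({0<..<L} \<times> {0<..<L}) H = integral (cbox (0, 0) (L, L)) H"
  proof -
    have "{0<..<L} \<times> {0<..<L} = box (0, 0) (L, L)"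
      by (auto simp: box_def Basis_prod_def inner_prod_def)
    then show ?thesis
      by (simp only: integral_open_interval)
  qed
  finally show ?thesis .
qed

lemma parseval_trig_poly:
  assumes L: "L > 0"
  shows "(LINT z : {0<..<L} \<times> {0<..<L} | lborel. (cmod (trig_poly L M d (fst z) (snd z)))^2)
       = L^2 * (\<Sum>n\<in>freq_box M. (cmod (d n))^2)"
proof -
  define H where "H = (\<lambda>z. (cmod (trig_poly L M d (fst z) (snd z)))^2)"
  define C where "C = cbox (0::real, 0::real) (L, L)"
  have H_continuous: "continuous_on UNIV H"
    unfolding H_def trig_poly_def trig_mode_eq_wave by (intro continuous_intros)
  have H_expand: "complex_of_real (H z) = (\<Sum>n\<in>freq_box M. \<Sum>n'\<in>freq_box M.
      d n * cnj (d n') * (wave L (fst n - fst n') (fst z) * wave L (snd n - snd n') (snd z)))" for z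
    unfolding H_def complex_norm_square trig_poly_mult_cnj ..
  have "((\<lambda>z. complex_of_real (H z)) has_integral complex_of_real (integral C H)) C"
    unfolding C_def
    by (intro has_integral_of_real integrable_integral integrable_continuous
        continuous_on_subset[OF H_continuous]) simp
  moreover have "((\<lambda>z. complex_of_real (H z)) has_integral
      (\<Sum>n\<in>freq_box M. \<Sum>n'\<in>freq_box M. d n * cnj (d n') * (if n = n' then complex_of_real (L^2) else 0))) C"
    unfolding H_expand
  proof (intro has_integral_sum finite_freq_box has_integral_mult_right)
    fix n n' :: "int \<times> int"
    have "((\<lambda>z. wave L (fst n - fst n') (fst z) * wave L (snd n - snd n') (snd z)) has_integral
        integral C (\<lambda>z. wave L (fst n - fst n') (fst z) * wave L (snd n - snd n') (snd z))) C"
      unfolding C_def by (intro integrable_integral integrable_continuous continuous_intros)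
    then show "((\<lambda>z. wave L (fst n - fst n') (fst z) * wave L (snd n - snd n') (snd z)) has_integral
        (if n = n' then complex_of_real (L^2) else 0)) C"
      unfolding C_def integral_wave_times_wave[OF L] by (simp add: prod_eq_iff)
  qed
  ultimately have "complex_of_real (integral C H)
      = (\<Sum>n\<in>freq_box M. \<Sum>n'\<in>freq_box M. d n * cnj (d n') * (if n = n' then complex_of_real (L^2) else 0))"
    by (rule has_integral_unique)
  also have "\<dots> = complex_of_real (L^2 * (\<Sum>n\<in>freq_box M. (cmod (d n))^2))"
    by (simp add: if_distrib sum.delta complex_norm_square sum_distrib_left mult_ac
        del: of_real_power cong: if_cong)
  finally have "integral C H = L^2 * (\<Sum>n\<in>freq_box M. (cmod (d n))^2)"
    by (simp only: of_real_eq_iff)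
  then show ?thesis
    using set_lebesgue_integral_open_square_eq_integral[OF H_continuous, of L] unfolding H_def C_def by simp
qed

section \<open>Aliasing at the grid nodes\<close>

lemma card_residue_class_le:
  fixes l :: int
  assumes N_pos: "N > 0" and size: "2 * M + 1 \<le> q * N"
  shows "card {l' \<in> {- int M..int M}. int N dvd (l - l')} \<le> q"
proof -
  define A where "A = {l' \<in> {- int M..int M}. int N dvd (l - l')}"
  define k where "k = (\<lambda>l'. (l' + int M) div int N)"
  have "inj_on k A"
  proof (rule inj_onI)
    fix x y
    assume "x \<in> A" "y \<in> A" and same_quotient: "k x = k y"
    then have "int N dvd (l - y)" "int N dvd (l - x)"
      unfolding A_def by auto
    then have "int N dvd ((l - y) - (l - x))"
      by (rule dvd_diff)
    then have "(x + int M) mod int N = (y + int M) mod int N"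
      by (simp add: mod_eq_dvd_iff)
    then have "x + int M = y + int M"
      using same_quotient div_mult_mod_eq[of "x + int M" "int N"] div_mult_mod_eq[of "y + int M" "int N"]
      unfolding k_def by metis
    then show "x = y"
      by simp
  qed
  moreover have "k ` A \<subseteq> {0..<int q}"
  proof
    fix z
    assume "z \<in> k ` A"
    then obtain x where "x \<in> A" and z: "z = (x + int M) div int N"
      unfolding k_def by auto
    moreover have "2 * int M + 1 \<le> int q * int N"
      using of_nat_mono[OF size, where 'a=int] by simp
    ultimately have lower: "0 \<le> x + int M" and upper: "x + int M < int q * int N"
      unfolding A_def by auto
    have "z * int N \<le> x + int M"
      unfolding z using N_pos minus_mod_eq_div_mult[of "x + int M" "int N"] pos_mod_sign[of "int N" "x + int M"]
      by linarith
    then have "z * int N < int q * int N"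
      using upper by linarith
    then have "z < int q"
      by (rule mult_right_less_imp_less) simp
    moreover have "0 \<le> z"
      unfolding z using N_pos lower by (simp add: pos_imp_zdiv_nonneg_iff)
    ultimately show "z \<in> {0..<int q}"
      by simp
  qed
  ultimately have "card A \<le> card {0..<int q}"
    by (intro card_inj_on_le) auto
  then show ?thesis
    unfolding A_def by simp
qed

definition aliased :: "nat \<Rightarrow> int \<times> int \<Rightarrow> int \<times> int \<Rightarrow> bool" where
  "aliased N n n' \<longleftrightarrow> int N dvd (fst n - fst n') \<and> int N dvd (snd n - snd n')"

lemma aliased_sym: "aliased N n n' \<longleftrightarrow> aliased N n' n"
  unfolding aliased_def by (metis dvd_minus_iff minus_diff_eq)

lemma card_aliased_le:
  assumes "N > 0" and "2 * M + 1 \<le> q * N"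
  shows "card {n' \<in> freq_box M. aliased N n n'} \<le> q^2"
proof -
  have "{n' \<in> freq_box M. aliased N n n'}
      = {l' \<in> {- int M..int M}. int N dvd (fst n - l')} \<times> {m' \<in> {- int M..int M}. int N dvd (snd n - m')}"
    unfolding freq_box_def aliased_def by auto
  then show ?thesis
    using card_residue_class_le[OF assms] by (simp add: card_cartesian_product power2_eq_square mult_mono)
qed

lemma sum_related_products_le:
  fixes a :: "'a \<Rightarrow> real"
  assumes "finite B"
    and R_sym: "\<And>n n'. R n n' \<longleftrightarrow> R n' n"
    and R_card: "\<And>n. n \<in> B \<Longrightarrow> card {n' \<in> B. R n n'} \<le> C"
  shows "(\<Sum>n\<in>B. \<Sum>n'\<in>B. if R n n' then a n * a n' else 0) \<le> real C * (\<Sum>n\<in>B. (a n)^2)"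
proof -
  define T where "T = (\<Sum>n\<in>B. \<Sum>n'\<in>B. if R n n' then (a n)^2 else 0)"
  have T_swapped: "(\<Sum>n\<in>B. \<Sum>n'\<in>B. if R n n' then (a n')^2 else 0) = T"
    unfolding T_def by (subst sum.swap) (simp add: R_sym)
  have am_gm: "a n * a n' \<le> (a n)^2 / 2 + (a n')^2 / 2" for n n'
    using sum_squares_bound[of "a n" "a n'"] by simp
  have "(\<Sum>n\<in>B. \<Sum>n'\<in>B. if R n n' then a n * a n' else 0)
      \<le> (\<Sum>n\<in>B. \<Sum>n'\<in>B. (if R n n' then (a n)^2 else 0) / 2 + (if R n n' then (a n')^2 else 0) / 2)"
    by (intro sum_mono) (simp add: am_gm)
  also have "\<dots> = T"
    unfolding sum.distrib sum_divide_distrib[symmetric] T_swapped by (simp add: T_def)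
  also have "T = (\<Sum>n\<in>B. real (card {n' \<in> B. R n n'}) * (a n)^2)"
    unfolding T_def using assms(1) by (simp add: sum.If_cases Int_def)
  also have "\<dots> \<le> (\<Sum>n\<in>B. real C * (a n)^2)"
    using R_card by (intro sum_mono mult_right_mono) auto
  finally show ?thesis
    by (simp add: sum_distrib_left)
qed

lemma sum_nodes_trig_poly_le:
  assumes L: "L > 0" and N_pos: "N > 0" and size: "2 * M + 1 \<le> q * N"
  shows "(\<Sum>i\<in>{1..int N}. \<Sum>j\<in>{1..int N}. (cmod (trig_poly L M d (node L N off i) (node L N off j)))^2)
       \<le> real (q^2) * (real N)^2 * (\<Sum>n\<in>freq_box M. (cmod (d n))^2)"
proof -
  define nd where "nd = node L N off"
  define S where "S = (\<lambda>t. \<Sum>i\<in>{1..int N}. wave L t (nd i))"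
  define B where "B = freq_box M"
  have "(\<Sum>i\<in>{1..int N}. \<Sum>j\<in>{1..int N}. (cmod (trig_poly L M d (nd i) (nd j)))^2)
      = Re (\<Sum>i\<in>{1..int N}. \<Sum>j\<in>{1..int N}. trig_poly L M d (nd i) (nd j) * cnj (trig_poly L M d (nd i) (nd j)))"
    by (simp add: Re_sum complex_mult_cnj power2_eq_square cmod_def)
  also have "(\<Sum>i\<in>{1..int N}. \<Sum>j\<in>{1..int N}. trig_poly L M d (nd i) (nd j) * cnj (trig_poly L M d (nd i) (nd j)))
      = (\<Sum>n\<in>B. \<Sum>n'\<in>B. d n * cnj (d n') * (S (fst n - fst n') * S (snd n - snd n')))"
    unfolding trig_poly_mult_cnj S_def B_def sum_product by (subst sum_swap2) (simp add: sum_distrib_left)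
  also have "Re (\<Sum>n\<in>B. \<Sum>n'\<in>B. d n * cnj (d n') * (S (fst n - fst n') * S (snd n - snd n')))
      \<le> (\<Sum>n\<in>B. \<Sum>n'\<in>B. cmod (d n * cnj (d n') * (S (fst n - fst n') * S (snd n - snd n'))))"
    by (rule order_trans[OF complex_Re_le_cmod order_trans[OF norm_sum sum_mono[OF norm_sum]]])
  also have "\<dots> = (real N)^2 * (\<Sum>n\<in>B. \<Sum>n'\<in>B. if aliased N n n' then cmod (d n) * cmod (d n') else 0)"
    unfolding sum_distrib_left
  proof (intro sum.cong refl)
    fix n n' :: "int \<times> int"
    have "cmod (S t) = (if int N dvd t then real N else 0)" for t
      unfolding S_def nd_def by (rule norm_sum_wave_nodes[OF L N_pos])
    then show "cmod (d n * cnj (d n') * (S (fst n - fst n') * S (snd n - snd n')))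
        = (real N)^2 * (if aliased N n n' then cmod (d n) * cmod (d n') else 0)"
      by (simp add: aliased_def norm_mult power2_eq_square)
  qed
  also have "\<dots> \<le> (real N)^2 * (real (q^2) * (\<Sum>n\<in>B. (cmod (d n))^2))"
    using sum_related_products_le[OF _ aliased_sym card_aliased_le[OF N_pos size]]
    unfolding B_def by (intro mult_left_mono) simp_all
  finally show ?thesis
    unfolding nd_def B_def by (simp add: mult_ac)
qed

section \<open>Discrete versus continuous norms\<close>

lemma sum_grid_power_le_integral:
  assumes L: "L > 0" and g: "grid_periodic (2*K+1) g" and q: "q \<ge> 1"
  shows "(L / real (2*K+1))^2 * (\<Sum>i\<in>{1..int (2*K+1)}. \<Sum>j\<in>{1..int (2*K+1)}. \<bar>g i j\<bar> ^ (2*q))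
       \<le> real (q^2) * (LINT z : {0<..<L} \<times> {0<..<L} | lborel. (cmod (trig_interp L K off g (fst z) (snd z)))^(2*q))"
proof -
  define N where "N = 2*K+1"
  define F where "F = trig_interp L K off g"
  obtain d where d: "\<And>x y. F x y ^ q = trig_poly L (q * K) d x y"
    using trig_poly_power[of L K _ q] unfolding F_def trig_interp_eq_trig_poly by blast
  have power_norm: "(cmod (F x y))^(2*q) = (cmod (trig_poly L (q * K) d x y))^2" for x y
  proof -
    have "(cmod (F x y))^(2*q) = (cmod (F x y ^ q))^2"
      by (simp add: norm_power power_mult mult.commute)
    then show ?thesis
      by (simp only: d)
  qed
  have "\<bar>g i j\<bar> = cmod (F (node L N off i) (node L N off j))" for i j
    unfolding F_def N_def trig_interp_node[OF L g] by simp
  then have "(L / real N)^2 * (\<Sum>i\<in>{1..int N}. \<Sum>j\<in>{1..int N}. \<bar>g i j\<bar> ^ (2*q))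
      = (L / real N)^2 * (\<Sum>i\<in>{1..int N}. \<Sum>j\<in>{1..int N}.
          (cmod (trig_poly L (q * K) d (node L N off i) (node L N off j)))^2)"
    by (simp add: power_norm)
  also have "\<dots> \<le> (L / real N)^2 * (real (q^2) * (real N)^2 * (\<Sum>n\<in>freq_box (q * K). (cmod (d n))^2))"
    using q by (intro mult_left_mono sum_nodes_trig_poly_le[OF L]) (simp_all add: N_def algebra_simps)
  also have "\<dots> = real (q^2) * (L^2 * (\<Sum>n\<in>freq_box (q * K). (cmod (d n))^2))"
    unfolding N_def by (simp add: field_simps)
  also have "\<dots> = real (q^2) * (LINT z : {0<..<L} \<times> {0<..<L} | lborel. (cmod (F (fst z) (snd z)))^(2*q))"
    unfolding power_norm parseval_trig_poly[OF L] ..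
  finally show ?thesis
    unfolding N_def F_def .
qed

lemma disc_norm_even_le:
  assumes L: "L > 0" and g: "grid_periodic (2*K+1) g" and q: "q \<ge> 1"
  shows "disc_norm L (2*K+1) (2*q) g \<le> real q powr (1 / real q) * Lp_norm_box L (2*q) (trig_interp L K off g)"
proof -
  define Y where "Y = (LINT z : {0<..<L} \<times> {0<..<L} | lborel. (cmod (trig_interp L K off g (fst z) (snd z)))^(2*q))"
  have Y_nonneg: "0 \<le> Y"
    unfolding Y_def set_lebesgue_integral_def by simp
  have "disc_norm L (2*K+1) (2*q) g \<le> (real (q^2) * Y) powr (1 / real (2*q))"
    unfolding disc_norm_def Y_def using sum_grid_power_le_integral[OF assms]
    by (intro powr_mono2) (simp_all add: sum_nonneg)
  also have "\<dots> = real (q^2) powr (1 / real (2*q)) * Lp_norm_box L (2*q) (trig_interp L K off g)"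
    unfolding Lp_norm_box_def Y_def[symmetric] using Y_nonneg by (simp add: powr_mult)
  also have "real (q^2) powr (1 / real (2*q)) = (real q powr 2) powr (1 / real (2*q))"
    using q by (simp add: powr_numeral)
  also have "\<dots> = real q powr (2 * (1 / real (2*q)))"
    by (rule powr_powr)
  also have "\<dots> = real q powr (1 / real q)"
    by simp
  finally show ?thesis .
qed

lemma powr_inverse_le_sqrt:
  assumes "q \<ge> 1"
  shows "real q powr (1 / real q) \<le> sqrt (real q)"
proof (cases "q = 1")
  case False
  then have "real q powr (1 / real q) \<le> real q powr (1 / 2)"
    using assms by (intro powr_mono) (simp_all add: field_simps)
  then show ?thesis
    by (simp add: powr_half_sqrt)
qed simp

lemma disc_norm_le_Lp_norm_box:
  assumes "L > 0" and "grid_periodic (2*K+1) g" and "even p" and "p \<ge> 2"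
  shows "disc_norm L (2*K+1) p g \<le> sqrt (real p / 2) * Lp_norm_box L p (trig_interp L K off g)"
proof -
  obtain q where p: "p = 2 * q" and q: "q \<ge> 1"
    using assms(3,4) by (auto elim!: evenE)
  have "disc_norm L (2*K+1) p g \<le> real q powr (1 / real q) * Lp_norm_box L p (trig_interp L K off g)"
    unfolding p by (rule disc_norm_even_le[OF assms(1,2) q])
  also have "\<dots> \<le> sqrt (real p / 2) * Lp_norm_box L p (trig_interp L K off g)"
    unfolding p using powr_inverse_le_sqrt[OF q] by (intro mult_right_mono) (simp_all add: Lp_norm_box_def)
  finally show ?thesis .
qed

theorem lemmaA2:
  fixes L :: real and K p :: nat and \<phi> f :: "int \<Rightarrow> int \<Rightarrow> real"
  assumes "L > 0"
    and "grid_periodic (2*K+1) \<phi>"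
    and "grid_periodic (2*K+1) f"
    and "p \<in> {4, 6}"
  shows "disc_norm L (2*K+1) p \<phi> \<le> sqrt (real p / 2) * Lp_norm_box L p (trig_interp L K (1/2) \<phi>)
       \<and> disc_norm L (2*K+1) p f \<le> sqrt (real p / 2) * Lp_norm_box L p (trig_interp L K 0 f)"
proof -
  have "even p" "p \<ge> 2"
    using assms(4) by auto
  then show ?thesis
    using disc_norm_le_Lp_norm_box[OF assms(1)] assms(2,3) by blast
qed

end
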